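(* Let $g:[0,1]\to[0,\infty)$ be differentiable on $(0,1)$ and suppose that for some $p^*\in(0,1)$, $0<g'(p)\le(1/p-1/p^* )\frac{g(p)}{1-p}$ for $p\in(0,p^* )$ and $g'(p)<0$ for $p\in(p^*,1)$. For integers $r\ge1$ let $u_r(p,n,g)=g(p)^r(1-p)^n(1-(1-p)^n)/p$, let $p^*_r$ be a maximizer of $u_r(\cdot,n,g)$ over $(0,1)$, and let $c(r)=g(p^*_r)/(r-1)$. Then for all $r\ge3$: 1. If either $g(p)/p$ is non-increasing, or $n<1+\frac{4}{(1-p^* )^2}$, then $$c(r)\le0.5\,g\Big(\frac{3}{n+(3/p^* )-1}\Big).$$ 2. If $n\ge1+\frac{4}{(1-p^* )^2}$, then $$c(r)\le\max\Big(0.5\,g\Big(\frac{3}{n+(3/p^* )-1}\Big),\ \frac{1}{r_4-1}\,g\Big(\frac{r_4}{n+(r_4/p^* )-1}\Big)\Big),$$ where $r_4=0.5(n-1)(1-p^* )\Big(1+\sqrt{1-\frac{4}{(n-1)(1-p^* )^2}}\Big)$. *)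

theory Defs
  imports "HOL-Analysis.Analysis"
begin

definition u_obj :: "nat \<Rightarrow> real \<Rightarrow> nat \<Rightarrow> (real \<Rightarrow> real) \<Rightarrow> real" where
  "u_obj r p n g = g p ^ r * (1 - p) ^ n * (1 - (1 - p) ^ n) / p"

end

theory Submission
  imports Defs
begin

text \<open>
  The first bound in fact holds without its side conditions, which also gives the second.
  At an interior maximizer \<open>p\<^sub>r\<close> with \<open>g p\<^sub>r > 0\<close>, the first-order condition for
  \<open>g\<^sup>r \<cdot> u_weight n\<close> and the estimate \<open>u_weight' / u_weight \<le> -n / (1 - p)\<close> (Bernoulli's
  inequality) force \<open>r g'(p\<^sub>r) \<ge> n g(p\<^sub>r) / (1 - p\<^sub>r) > 0\<close>. Hence \<open>p\<^sub>r < p\<^sup>*\<close>, and the upper bound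
  on \<open>g'\<close> turns this into \<open>p\<^sub>r \<le> r p\<^sup>* / (n p\<^sup>* + r) \<le> (r - 1)/2 \<cdot> q\<close> with
  \<open>q = 3 / (n + 3/p\<^sup>* - 1) \<le> p\<^sup>*\<close>. On \<open>(0, p\<^sup>*]\<close> the function \<open>g\<close> is nondecreasing and, since
  \<open>g' \<le> g / p\<close> there, \<open>g(p)/p\<close> is nonincreasing; so \<open>g(p\<^sub>r) \<le> (r - 1)/2 \<cdot> g(q)\<close>.
\<close>

lemma one_minus_power_ge:
  fixes t :: real
  assumes "0 \<le> t" "t \<le> 1"
  shows "real n * (1 - t) * t ^ (n - 1) \<le> 1 - t ^ n"
proof (induction n)
  case (Suc n)
  have "t ^ n \<le> t ^ (n - 1)"
    using assms by (cases n) (auto simp: mult_left_le_one_le)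
  then have "real n * (1 - t) * t ^ n \<le> real n * (1 - t) * t ^ (n - 1)"
    using assms by (intro mult_left_mono) auto
  moreover have "1 - t ^ Suc n = (1 - t ^ n) + (1 - t) * t ^ n"
    by (simp add: algebra_simps)
  ultimately show ?case
    using Suc by (simp add: algebra_simps)
qed simp

definition u_weight :: "nat \<Rightarrow> real \<Rightarrow> real" where
  "u_weight n p = (1 - p) ^ n * (1 - (1 - p) ^ n) / p"

definition u_weight_deriv :: "nat \<Rightarrow> real \<Rightarrow> real" where
  "u_weight_deriv n p = real n * (1 - p) ^ (n - 1) * (2 * (1 - p) ^ n - 1) / p - u_weight n p / p"

lemma u_obj_eq: "u_obj r p n g = g p ^ r * u_weight n p"
  by (simp add: u_obj_def u_weight_def)

lemma u_weight_pos:
  assumes "0 < p" "p < 1" "n \<ge> 1"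
  shows "u_weight n p > 0"
  using assms by (simp add: u_weight_def power_less_one_iff)

lemma u_weight_has_derivative:
  assumes "p \<noteq> 0"
  shows "(u_weight n has_real_derivative u_weight_deriv n p) (at p)"
  unfolding u_weight_deriv_def u_weight_def
  using assms
  by (auto intro!: derivative_eq_intros simp: field_simps power2_eq_square)

lemma u_weight_deriv_le:
  assumes "0 < p" "p < 1" "n \<ge> 1"
  shows "u_weight_deriv n p \<le> - real n * u_weight n p / (1 - p)"
proof -
  define t where "t = 1 - p"
  define s where "s = t ^ n"
  have t: "0 < t" "t < 1" and s: "s = t ^ (n - 1) * t" "s \<ge> 0"
    using assms by (auto simp: t_def s_def simp flip: power_Suc2)
  have "u_weight_deriv n p + real n * u_weight n p / (1 - p)
        = s / p^2 * (real n * p * t ^ (n - 1) - (1 - s))"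
    unfolding u_weight_deriv_def u_weight_def t_def[symmetric] s_def[symmetric] using assms t s
    by (simp add: field_simps power2_eq_square)
  also have "\<dots> \<le> 0"
    using one_minus_power_ge[of t n] t s(2) by (intro mult_nonneg_nonpos) (auto simp: t_def s_def)
  finally show ?thesis by simp
qed

lemma DERIV_power_mult_local_max:
  fixes f w :: "real \<Rightarrow> real"
  assumes f: "(f has_real_derivative f') (at x)" and w: "(w has_real_derivative w') (at x)"
    and S: "open S" "x \<in> S" and max: "\<forall>y\<in>S. f y ^ r * w y \<le> f x ^ r * w x"
    and "f x > 0" "r \<ge> 1"
  shows "real r * f' * w x + f x * w' = 0"
proof -
  obtain d where d: "d > 0" "ball x d \<subseteq> S"
    using S openE by blast
  have "((\<lambda>y. f y ^ r * w y) has_real_derivative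
          real r * f x ^ (r - 1) * f' * w x + f x ^ r * w') (at x)"
    using f w by (auto intro!: derivative_eq_intros)
  then have "real r * f x ^ (r - 1) * f' * w x + f x ^ r * w' = 0"
    by (rule DERIV_local_max[OF _ d(1)]) (use d max in \<open>auto simp: dist_real_def\<close>)
  moreover have "f x ^ r = f x ^ (r - 1) * f x"
    using \<open>r \<ge> 1\<close> by (simp flip: power_Suc2)
  ultimately have "f x ^ (r - 1) * (real r * f' * w x + f x * w') = 0"
    by (simp add: algebra_simps)
  then show ?thesis
    using \<open>f x > 0\<close> by simp
qed

lemma threshold_pos_le:
  fixes n :: nat and ps :: real
  assumes "0 < ps" "n \<ge> 1"
  shows "0 < 3 / (real n + 3 / ps - 1)" "3 / (real n + 3 / ps - 1) \<le> ps"
proof -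
  have d: "0 < 3 / ps" "3 / ps \<le> real n + 3 / ps - 1"
    using assms by simp_all
  then show "0 < 3 / (real n + 3 / ps - 1)"
    by (intro divide_pos_pos) linarith+
  have "3 / (real n + 3 / ps - 1) \<le> 3 / (3 / ps)"
    using d by (intro divide_left_mono mult_pos_pos) linarith+
  then show "3 / (real n + 3 / ps - 1) \<le> ps"
    by simp
qed

lemma maximizer_bound_le_threshold:
  fixes n r :: nat and ps :: real
  assumes "0 < ps" "n \<ge> 1" "r \<ge> 3"
  shows "real r * ps / (real n * ps + real r) \<le> (real r - 1) / 2 * (3 / (real n + 3 / ps - 1))"
proof -
  have "3 * (real r - 1) * (real n * ps + real r) - 2 * real r * (real n * ps + 3 - ps)
          = real n * ps * (real r - 3) + 3 * real r * (real r - 3) + 2 * real r * ps"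
    by (simp add: algebra_simps)
  also have "\<dots> \<ge> 0"
    using assms by simp
  finally have "ps * (2 * real r * (real n * ps + 3 - ps))
                  \<le> ps * (3 * (real r - 1) * (real n * ps + real r))"
    using assms by (intro mult_left_mono) auto
  moreover have "real n * ps + 3 - ps > 0"
    using assms mult_right_mono[of 1 "real n" ps] by linarith
  ultimately show ?thesis
    using assms by (simp add: field_simps)
qed

locale peaked_profile =
  fixes g :: "real \<Rightarrow> real" and ps :: real
  assumes nonneg: "\<forall>p\<in>{0..1}. g p \<ge> 0"
    and differentiable: "\<forall>p\<in>{0<..<1}. g differentiable (at p)"
    and ps_bounds: "0 < ps" "ps < 1"
    and deriv_left: "\<forall>p\<in>{0<..<ps}. 0 < deriv g p \<and> deriv g p \<le> (1/p - 1/ps) * g p / (1 - p)"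
    and deriv_right: "\<forall>p\<in>{ps<..<1}. deriv g p < 0"
begin

lemma has_deriv:
  assumes "0 < p" "p < 1"
  shows "(g has_real_derivative deriv g p) (at p)"
  using assms differentiable DERIV_deriv_iff_real_differentiable by auto

lemma continuous_on_interval:
  assumes "0 < x" "y < 1"
  shows "continuous_on {x..y} g"
  using assms by (intro DERIV_atLeastAtMost_imp_continuous_on) (meson has_deriv less_le_trans le_less_trans)

lemma mono_below_peak:
  assumes "0 < x" "x \<le> y" "y \<le> ps"
  shows "g x \<le> g y"
proof (rule DERIV_nonneg_imp_increasing_open[OF \<open>x \<le> y\<close> _ continuous_on_interval])
  fix z
  assume "x < z" "z < y"
  then have "0 < z" "z < ps" "z < 1"
    using assms ps_bounds by auto
  then show "\<exists>d. (g has_real_derivative d) (at z) \<and> 0 \<le> d"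
    using has_deriv deriv_left by (intro exI[of _ "deriv g z"]) (simp add: less_imp_le)
qed (use assms ps_bounds in auto)

lemma antimono_above_peak:
  assumes "ps \<le> x" "x \<le> y" "y < 1"
  shows "g y \<le> g x"
proof (rule DERIV_nonpos_imp_decreasing_open[OF \<open>x \<le> y\<close> _ continuous_on_interval])
  fix z
  assume "x < z" "z < y"
  then have "ps < z" "z < 1"
    using assms by auto
  then show "\<exists>d. (g has_real_derivative d) (at z) \<and> d \<le> 0"
    using has_deriv deriv_right ps_bounds by (intro exI[of _ "deriv g z"]) (simp add: less_imp_le)
qed (use assms ps_bounds in auto)

lemma deriv_nonpos_above_peak:
  assumes "ps \<le> p" "p < 1"
  shows "deriv g p \<le> 0"
proof (cases "p = ps")
  case True
  have local_max: "\<forall>y. \<bar>ps - y\<bar> < min ps (1 - ps) \<longrightarrow> g y \<le> g ps"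
  proof (intro allI impI)
    fix y
    assume "\<bar>ps - y\<bar> < min ps (1 - ps)"
    then have "0 < y" "y < 1"
      by auto
    then show "g y \<le> g ps"
      using mono_below_peak[of y ps] antimono_above_peak[of ps y] by (cases "y \<le> ps") auto
  qed
  then have "deriv g ps = 0"
    using ps_bounds by (intro DERIV_local_max[OF has_deriv _ local_max]) auto
  then show ?thesis
    using True by simp
next
  case False
  then have "deriv g p < 0"
    using assms deriv_right by simp
  then show ?thesis
    by simp
qed

lemma deriv_le_ratio_below_peak:
  assumes "0 < z" "z < ps"
  shows "deriv g z \<le> g z / z"
proof -
  have "deriv g z \<le> (1/z - 1/ps) / (1 - z) * g z"
    using assms deriv_left by simp
  also have "\<dots> \<le> 1 / z * g z"
  proof (rule mult_right_mono)
    show "(1/z - 1/ps) / (1 - z) \<le> 1 / z"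
      using assms ps_bounds by (simp add: field_simps)
    show "0 \<le> g z"
      using assms ps_bounds nonneg by simp
  qed
  finally show ?thesis
    by simp
qed

lemma ratio_antimono_below_peak:
  assumes "0 < x" "x \<le> y" "y \<le> ps"
  shows "g y / y \<le> g x / x"
proof (rule DERIV_nonpos_imp_decreasing_open[OF \<open>x \<le> y\<close>])
  fix z
  assume "x < z" "z < y"
  then have z: "0 < z" "z < ps" "z < 1"
    using assms ps_bounds by auto
  then have "((\<lambda>p. g p / p) has_real_derivative (deriv g z * z - g z) / z^2) (at z)"
    by (auto intro!: derivative_eq_intros has_deriv simp: power2_eq_square field_simps)
  moreover have "deriv g z * z - g z \<le> 0"
    using deriv_le_ratio_below_peak[OF z(1,2)] z by (simp add: field_simps)
  ultimately show "\<exists>d. ((\<lambda>p. g p / p) has_real_derivative d) (at z) \<and> d \<le> 0"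
    by (intro exI conjI) (auto intro: divide_nonpos_nonneg)
next
  show "continuous_on {x..y} (\<lambda>p. g p / p)"
    using assms ps_bounds by (intro continuous_intros continuous_on_interval) auto
qed

lemma maximizer_bounds:
  assumes n: "n \<ge> 1" and r: "r \<ge> 1" and pr: "0 < pr" "pr < 1"
    and max: "\<forall>q\<in>{0<..<1}. u_obj r q n g \<le> u_obj r pr n g"
    and pos: "g pr > 0"
  shows "pr < ps" and "pr \<le> real r * ps / (real n * ps + real r)"
proof -
  have w: "u_weight n pr > 0"
    using u_weight_pos pr n by simp
  have "real r * deriv g pr * u_weight n pr + g pr * u_weight_deriv n pr = 0"
    using pr max pos r
    by (intro DERIV_power_mult_local_max[OF has_deriv u_weight_has_derivative, of _ "{0<..<1}"])
       (auto simp: u_obj_eq)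
  moreover have "g pr * u_weight_deriv n pr \<le> g pr * (- real n * u_weight n pr / (1 - pr))"
    using u_weight_deriv_le[OF pr n] pos by (intro mult_left_mono) auto
  ultimately have "(real n * g pr / (1 - pr)) * u_weight n pr \<le> (real r * deriv g pr) * u_weight n pr"
    by (simp add: algebra_simps)
  then have growth: "real n * g pr / (1 - pr) \<le> real r * deriv g pr"
    by (rule mult_right_le_imp_le[OF _ w])
  moreover have "real n * g pr / (1 - pr) > 0"
    using n pos pr by simp
  ultimately have "0 < real r * deriv g pr"
    by linarith
  then have "deriv g pr > 0"
    by (simp add: zero_less_mult_iff)
  then show below_peak: "pr < ps"
    using deriv_nonpos_above_peak[of pr] pr by (meson not_le)
  have "g pr / (1 - pr) * real n = real n * g pr / (1 - pr)"
    by simp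
  also have "\<dots> \<le> real r * deriv g pr"
    by (rule growth)
  also have "\<dots> \<le> real r * ((1/pr - 1/ps) * g pr / (1 - pr))"
    using deriv_left pr below_peak by (intro mult_left_mono) simp_all
  also have "\<dots> = g pr / (1 - pr) * (real r * (1/pr - 1/ps))"
    by simp
  finally have "g pr / (1 - pr) * real n \<le> g pr / (1 - pr) * (real r * (1/pr - 1/ps))" .
  moreover have "g pr / (1 - pr) > 0"
    using pos pr by simp
  ultimately have "real n \<le> real r * (1/pr - 1/ps)"
    by (rule mult_left_le_imp_le)
  then have "pr * (real n * ps + real r) \<le> real r * ps"
    using pr ps_bounds by (simp add: field_simps)
  moreover have "real n * ps + real r > 0"
    using ps_bounds r by (simp add: add_nonneg_pos)
  ultimately show "pr \<le> real r * ps / (real n * ps + real r)"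
    by (simp add: field_simps)
qed

lemma le_scaled_below_peak:
  assumes "0 < p" "p \<le> ps" "0 < q" "q \<le> ps" "p \<le> c * q" "1 \<le> c"
  shows "g p \<le> c * g q"
proof -
  have gq: "0 \<le> g q"
    using assms ps_bounds nonneg by simp
  show ?thesis
  proof (cases "p \<le> q")
    case True
    then have "g p \<le> g q"
      using assms by (intro mono_below_peak) auto
    also have "\<dots> \<le> c * g q"
      using assms gq mult_right_mono[of 1 c "g q"] by simp
    finally show ?thesis .
  next
    case False
    then have "g p / p \<le> g q / q"
      using assms by (intro ratio_antimono_below_peak) auto
    then have "g p \<le> p / q * g q"
      using assms by (simp add: field_simps)
    also have "\<dots> \<le> c * g q"
      using assms gq by (intro mult_right_mono) (simp_all add: divide_le_eq mult.commute)
    finally show ?thesis .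
  qed
qed

lemma maximizer_value_le:
  assumes n: "n \<ge> 1" and r: "r \<ge> 3" and pr: "0 < pr" "pr < 1"
    and max: "\<forall>q\<in>{0<..<1}. u_obj r q n g \<le> u_obj r pr n g"
  shows "g pr \<le> (real r - 1) / 2 * g (3 / (real n + 3 / ps - 1))"
proof -
  define q where "q = 3 / (real n + 3 / ps - 1)"
  have q: "0 < q" "q \<le> ps"
    using threshold_pos_le ps_bounds n by (simp_all add: q_def)
  show ?thesis
  proof (cases "g pr = 0")
    case True
    have "0 \<le> g q"
      using nonneg q ps_bounds by simp
    then show ?thesis
      using True r unfolding q_def by simp
  next
    case False
    then have "g pr > 0"
      using nonneg pr by (simp add: less_le)
    moreover have "r \<ge> 1"
      using r by simp
    ultimately have below_peak: "pr < ps" and bound: "pr \<le> real r * ps / (real n * ps + real r)"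
      using maximizer_bounds n pr max by simp_all
    have "pr \<le> (real r - 1) / 2 * q"
      using order_trans[OF bound maximizer_bound_le_threshold[OF ps_bounds(1) n r]]
      by (simp add: q_def)
    then show ?thesis
      using below_peak r pr q unfolding q_def by (intro le_scaled_below_peak) auto
  qed
qed

end

theorem lemma8:
  fixes g :: "real \<Rightarrow> real" and ps :: real and n r :: nat and pr :: real
  assumes g_nonneg: "\<forall>p\<in>{0..1}. g p \<ge> 0"
    and g_diff: "\<forall>p\<in>{0<..<1}. g differentiable (at p)"
    and ps: "0 < ps" "ps < 1"
    and g_left: "\<forall>p\<in>{0<..<ps}. 0 < deriv g p \<and> deriv g p \<le> (1/p - 1/ps) * g p / (1 - p)"
    and g_right: "\<forall>p\<in>{ps<..<1}. deriv g p < 0"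
    and n: "n \<ge> 1"
    and r: "r \<ge> 3"
    and pr_in: "pr \<in> {0<..<1}"
    and pr_max: "\<forall>q\<in>{0<..<1}. u_obj r q n g \<le> u_obj r pr n g"
  shows "((\<forall>x y. 0 < x \<and> x \<le> y \<and> y \<le> 1 \<longrightarrow> g y / y \<le> g x / x) \<or> real n < 1 + 4 / (1 - ps)^2
            \<longrightarrow> g pr / (real r - 1) \<le> (1/2) * g (3 / (real n + 3 / ps - 1)))
       \<and> (real n \<ge> 1 + 4 / (1 - ps)^2 \<longrightarrow>
            (let r4 = (1/2) * (real n - 1) * (1 - ps) * (1 + sqrt (1 - 4 / ((real n - 1) * (1 - ps)^2)))
             in g pr / (real r - 1) \<le> max ((1/2) * g (3 / (real n + 3 / ps - 1)))
                                            (1 / (r4 - 1) * g (r4 / (real n + r4 / ps - 1)))))"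
proof -
  interpret peaked_profile g ps
    using g_nonneg g_diff ps g_left g_right by unfold_locales
  have "g pr \<le> (real r - 1) / 2 * g (3 / (real n + 3 / ps - 1))"
    using maximizer_value_le n r pr_in pr_max by simp
  then have "g pr / (real r - 1) \<le> 1/2 * g (3 / (real n + 3 / ps - 1))"
    using r by (simp add: field_simps)
  then show ?thesis
    unfolding Let_def by (intro conjI impI le_max_iff_disj[THEN iffD2] disjI1)
qed

end
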